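(* Let $0<s_1<s_2<1$, $2s_1<d<\frac{2s_1s_2}{s_2-s_1}$, $a>0$, and suppose $g$ satisfies $(G_1)$–$(G_3)$. Then $I$ restricted to $\mathcal{P}_{\infty,a}$ is coercive: $I(u)\to+\infty$ as $\|u\|\to\infty$ with $u\in\mathcal{P}_{\infty,a}$.
   Context: For $s\in(0,1)$, $|\nabla_s u|_2^2=\int_{\mathbb{R}^d\times\mathbb{R}^d}\frac{|u(x)-u(y)|^2}{|x-y|^{d+2s}}dx\,dy$; $|\cdot|_p$ is the $L^p(\mathbb{R}^d)$ norm; $H^{s_1,s_2}(\mathbb{R}^d)=\{u\in L^2(\mathbb{R}^d):|\nabla_{s_1}u|_2<\infty,\ |\nabla_{s_2}u|_2<\infty\}$ with norm $\|u\|^2=|\nabla_{s_1}u|_2^2+|\nabla_{s_2}u|_2^2+|u|_2^2$. $S_a=\{u\in H^{s_1,s_2}(\mathbb{R}^d):|u|_2^2=a\}$. $g:\mathbb{R}\to\mathbb{R}$, $G(s)=\int_0^sg$, $\widetilde G(s)=\frac12g(s)s-G(s)$. $(G_1)$: $g$ continuous, odd. $(G_2)$: there exist $\alpha,\beta$ with $2+\frac{4s_2}{d}<\alpha<\beta<\frac{2d}{d-2s_1}$ and $\alpha G(s)\le g(s)s\le\beta G(s)$ for all $s$. $(G_3)$: $\widetilde G'$ exists and $\widetilde G'(s)s\ge\alpha\widetilde G(s)$ for all $s$. $I(u)=\frac12|\nabla_{s_1}u|_2^2+\frac12|\nabla_{s_2}u|_2^2-\int_{\mathbb{R}^d}G(u)dx$;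 $P_\infty(u)=s_1|\nabla_{s_1}u|_2^2+s_2|\nabla_{s_2}u|_2^2-d\int_{\mathbb{R}^d}\widetilde G(u)dx$; $\mathcal{P}_{\infty,a}=\{u\in S_a:P_\infty(u)=0\}$. *)

theory Defs
  imports "HOL-Analysis.Analysis"
begin

text \<open>Ambient space: an arbitrary Euclidean space 'a of dimension d = DIM('a), with Lebesgue (Borel) measure.\<close>

definition Gagliardo :: "real \<Rightarrow> ('a::euclidean_space \<Rightarrow> real) \<Rightarrow> ennreal" where
  "Gagliardo s u = (\<integral>\<^sup>+ z. ennreal ((u (fst z) - u (snd z))\<^sup>2
       / norm (fst z - snd z) powr (real DIM('a) + 2 * s)) \<partial>(lborel \<Otimes>\<^sub>M lborel))"

text \<open>The squared seminorm |nabla_s u|_2^2 (as a real number; finite on the space H).\<close>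
definition frac_sq :: "real \<Rightarrow> ('a::euclidean_space \<Rightarrow> real) \<Rightarrow> real" where
  "frac_sq s u = enn2real (Gagliardo s u)"

definition L2sq :: "('a::euclidean_space \<Rightarrow> real) \<Rightarrow> real" where
  "L2sq u = (\<integral>x. (u x)\<^sup>2 \<partial>lborel)"

definition Hspace :: "real \<Rightarrow> real \<Rightarrow> ('a::euclidean_space \<Rightarrow> real) set" where
  "Hspace s1 s2 = {u. u \<in> borel_measurable lborel \<and> integrable lborel (\<lambda>x. (u x)\<^sup>2)
      \<and> Gagliardo s1 u < \<infinity> \<and> Gagliardo s2 u < \<infinity>}"

definition Hnorm :: "real \<Rightarrow> real \<Rightarrow> ('a::euclidean_space \<Rightarrow> real) \<Rightarrow> real" where
  "Hnorm s1 s2 u = sqrt (frac_sq s1 u + frac_sq s2 u + L2sq u)"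

definition Sa :: "real \<Rightarrow> real \<Rightarrow> real \<Rightarrow> ('a::euclidean_space \<Rightarrow> real) set" where
  "Sa s1 s2 a = {u \<in> Hspace s1 s2. L2sq u = a}"

definition Gprim :: "(real \<Rightarrow> real) \<Rightarrow> real \<Rightarrow> real" where
  "Gprim g s = (LBINT t=0..s. g t)"

definition Gtil :: "(real \<Rightarrow> real) \<Rightarrow> real \<Rightarrow> real" where
  "Gtil g s = g s * s / 2 - Gprim g s"

definition Ifun :: "real \<Rightarrow> real \<Rightarrow> (real \<Rightarrow> real) \<Rightarrow> ('a::euclidean_space \<Rightarrow> real) \<Rightarrow> real" where
  "Ifun s1 s2 g u = frac_sq s1 u / 2 + frac_sq s2 u / 2 - (\<integral>x. Gprim g (u x) \<partial>lborel)"

definition Pinf :: "real \<Rightarrow> real \<Rightarrow> (real \<Rightarrow> real) \<Rightarrow> ('a::euclidean_space \<Rightarrow> real) \<Rightarrow> real" where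
  "Pinf s1 s2 g u = s1 * frac_sq s1 u + s2 * frac_sq s2 u
      - real DIM('a) * (\<integral>x. Gtil g (u x) \<partial>lborel)"

definition Pset :: "real \<Rightarrow> real \<Rightarrow> (real \<Rightarrow> real) \<Rightarrow> real \<Rightarrow> ('a::euclidean_space \<Rightarrow> real) set" where
  "Pset s1 s2 g a = {u \<in> Sa s1 s2 a. Pinf s1 s2 g u = 0}"

end

theory Submission
  imports Defs
begin

text \<open>The Ambrosetti--Rabinowitz bounds in \<open>(G\<^sub>2)\<close> give \<open>0 \<le> G \<le> 2/(\<alpha>-2) \<cdot> G\<^sup>~\<close>. On the
  Pohozaev manifold \<open>d \<integral> G\<^sup>~(u) = s\<^sub>1 |\<nabla>\<^sub>s\<^sub>1 u|\<^sup>2 + s\<^sub>2 |\<nabla>\<^sub>s\<^sub>2 u|\<^sup>2 \<le> s\<^sub>2 (|\<nabla>\<^sub>s\<^sub>1 u|\<^sup>2 + |\<nabla>\<^sub>s\<^sub>2 u|\<^sup>2)\<close>, hence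
  \<open>I(u) \<ge> c (|\<nabla>\<^sub>s\<^sub>1 u|\<^sup>2 + |\<nabla>\<^sub>s\<^sub>2 u|\<^sup>2) = c (\<parallel>u\<parallel>\<^sup>2 - a)\<close> with \<open>c = 1/2 - 2 s\<^sub>2 / (d (\<alpha>-2))\<close>,
  and \<open>c > 0\<close> is exactly the condition \<open>\<alpha> > 2 + 4 s\<^sub>2 / d\<close>.\<close>

lemma Gprim_has_real_derivative:
  fixes g :: "real \<Rightarrow> real"
  assumes "continuous_on UNIV g"
  shows "(Gprim g has_real_derivative g x) (at x)"
proof -
  let ?a = "- \<bar>x\<bar> - 1" and ?b = "\<bar>x\<bar> + 1"
  have "Gprim g = (\<lambda>s. LBINT t=ereal 0..s. g t)"
    by (simp add: fun_eq_iff Gprim_def zero_ereal_def)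
  then have "(Gprim g has_vector_derivative g x) (at x within {?a..?b})"
    using interval_integral_FTC2[of ?a 0 ?b g x] continuous_on_subset[OF assms] by simp
  then have "(Gprim g has_vector_derivative g x) (at x within {?a<..<?b})"
    by (rule has_vector_derivative_within_subset) auto
  moreover have "at x within {?a<..<?b} = at x"
    by (rule at_within_open) auto
  ultimately show ?thesis
    by (simp add: has_real_derivative_iff_has_vector_derivative)
qed

lemma continuous_on_Gprim:
  assumes "continuous_on UNIV g"
  shows "continuous_on UNIV (Gprim g)"
  using Gprim_has_real_derivative[OF assms]
  by (meson DERIV_isCont continuous_at_imp_continuous_on)

lemma continuous_on_Gtil:
  assumes "continuous_on UNIV g"
  shows "continuous_on UNIV (Gtil g)"
proof -
  have "Gtil g = (\<lambda>s. g s * s / 2 - Gprim g s)"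
    by (simp add: fun_eq_iff Gtil_def)
  then show ?thesis
    using assms continuous_on_Gprim[OF assms] by (auto intro!: continuous_intros)
qed

lemma Gprim_nonneg:
  assumes "\<alpha> < \<beta>" "\<alpha> * Gprim g s \<le> g s * s" "g s * s \<le> \<beta> * Gprim g s"
  shows "0 \<le> Gprim g s"
proof -
  have "0 \<le> (\<beta> - \<alpha>) * Gprim g s"
    using assms(2,3) by (simp add: algebra_simps)
  then show ?thesis
    using assms(1) by (simp add: zero_le_mult_iff)
qed

lemma Gprim_le_Gtil:
  assumes "2 < \<alpha>" "\<alpha> * Gprim g s \<le> g s * s"
  shows "Gprim g s \<le> 2 / (\<alpha> - 2) * Gtil g s"
proof -
  have "(\<alpha> - 2) / 2 * Gprim g s = \<alpha> * Gprim g s / 2 - Gprim g s"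
    by (simp add: field_simps)
  then have "(\<alpha> - 2) / 2 * Gprim g s \<le> Gtil g s"
    using assms(2) by (simp add: Gtil_def)
  then show ?thesis
    using assms(1) by (simp add: field_simps)
qed

lemma Gtil_le_Gprim:
  assumes "g s * s \<le> \<beta> * Gprim g s"
  shows "Gtil g s \<le> (\<beta> / 2 - 1) * Gprim g s"
  using assms by (simp add: Gtil_def algebra_simps)

text \<open>No integrability is assumed: if \<open>f\<close> is not integrable its Bochner integral is the junk
  value \<open>0\<close>; otherwise \<open>h \<le> C f\<close> makes \<open>h\<close> integrable.\<close>

lemma integral_le_mult_integral_if_comparable:
  fixes f h :: "'a \<Rightarrow> real"
  assumes "f \<in> borel_measurable M" "h \<in> borel_measurable M" "0 < k"
    and "\<And>x. 0 \<le> f x" "\<And>x. f x \<le> k * h x" "\<And>x. h x \<le> C * f x"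
  shows "integral\<^sup>L M f \<le> k * integral\<^sup>L M h"
proof -
  have h_nonneg: "0 \<le> h x" for x
  proof -
    have "0 \<le> k * h x"
      using assms(4,5)[of x] by (rule order_trans)
    then show ?thesis
      using assms(3) by (simp add: zero_le_mult_iff)
  qed
  show ?thesis
  proof (cases "integrable M f")
    case True
    then have "integrable M (\<lambda>x. C * f x)"
      by simp
    then have "integrable M h"
      by (rule Bochner_Integration.integrable_bound[OF _ assms(2)])
         (use assms(6) h_nonneg in \<open>auto intro: order_trans[OF _ abs_ge_self]\<close>)
    with True have "integral\<^sup>L M f \<le> integral\<^sup>L M (\<lambda>x. k * h x)"
      by (intro integral_mono) (auto simp: assms(5))
    then show ?thesis
      by simp
  next
    case False
    then show ?thesis
      using assms(3) h_nonneg by (simp add: not_integrable_integral_eq integral_nonneg_AE)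
  qed
qed

lemma integral_Gprim_le_integral_Gtil:
  fixes u :: "'a \<Rightarrow> real"
  assumes "continuous_on UNIV g" "u \<in> borel_measurable M" "2 < \<alpha>" "\<alpha> < \<beta>"
    and "\<And>s. \<alpha> * Gprim g s \<le> g s * s" "\<And>s. g s * s \<le> \<beta> * Gprim g s"
  shows "(\<integral>x. Gprim g (u x) \<partial>M) \<le> 2 / (\<alpha> - 2) * (\<integral>x. Gtil g (u x) \<partial>M)"
proof (rule integral_le_mult_integral_if_comparable)
  show "(\<lambda>x. Gprim g (u x)) \<in> borel_measurable M" "(\<lambda>x. Gtil g (u x)) \<in> borel_measurable M"
    using assms(2) continuous_on_Gprim[OF assms(1)] continuous_on_Gtil[OF assms(1)]
    by (auto intro: measurable_compose borel_measurable_continuous_onI)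
  show "Gtil g (u x) \<le> (\<beta> / 2 - 1) * Gprim g (u x)" for x
    using Gtil_le_Gprim assms(6) .
qed (use assms Gprim_nonneg Gprim_le_Gtil in auto)

lemma Ifun_lower_bound_on_Pset:
  fixes u :: "'a::euclidean_space \<Rightarrow> real"
  assumes "s1 \<le> s2" "u \<in> Pset s1 s2 g a"
    and "continuous_on UNIV g" "2 < \<alpha>" "\<alpha> < \<beta>"
    and "\<And>s. \<alpha> * Gprim g s \<le> g s * s" "\<And>s. g s * s \<le> \<beta> * Gprim g s"
  shows "(1 / 2 - 2 * s2 / (real DIM('a) * (\<alpha> - 2))) * (frac_sq s1 u + frac_sq s2 u)
           \<le> Ifun s1 s2 g u"
proof -
  define A B d where "A = frac_sq s1 u" and "B = frac_sq s2 u" and "d = real DIM('a)"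
  define k where "k = 2 / (\<alpha> - 2)"
  have "0 \<le> A" "0 < d" "0 < k"
    using assms(4) by (simp_all add: A_def d_def k_def frac_sq_def)
  have u_meas: "u \<in> borel_measurable lborel"
    and pohozaev: "d * (\<integral>x. Gtil g (u x) \<partial>lborel) = s1 * A + s2 * B"
    using assms(2) by (auto simp: Pset_def Sa_def Hspace_def Pinf_def A_def B_def d_def)
  have "(\<integral>x. Gprim g (u x) \<partial>lborel) \<le> k * (\<integral>x. Gtil g (u x) \<partial>lborel)"
    unfolding k_def using integral_Gprim_le_integral_Gtil[OF assms(3) u_meas assms(4-7)] .
  also have "\<dots> = k * (d * (\<integral>x. Gtil g (u x) \<partial>lborel)) / d"
    using \<open>0 < d\<close> by simp
  also have "\<dots> = k * (s1 * A + s2 * B) / d"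
    by (simp only: pohozaev)
  also have "\<dots> \<le> k * (s2 * (A + B)) / d"
    using \<open>0 \<le> A\<close> \<open>0 < d\<close> \<open>0 < k\<close> assms(1)
    by (intro divide_right_mono mult_left_mono) (auto simp: distrib_left mult_right_mono)
  finally have "(\<integral>x. Gprim g (u x) \<partial>lborel) \<le> k * (s2 * (A + B)) / d" .
  moreover have "(1 / 2 - 2 * s2 / (d * (\<alpha> - 2))) * (A + B) = A / 2 + B / 2 - k * (s2 * (A + B)) / d"
    using \<open>0 < d\<close> assms(4) by (simp add: k_def field_simps)
  ultimately show ?thesis
    unfolding Ifun_def A_def B_def d_def by linarith
qed

lemma Hnorm_sq_on_Sa:
  assumes "u \<in> Sa s1 s2 a"
  shows "(Hnorm s1 s2 u)\<^sup>2 = frac_sq s1 u + frac_sq s2 u + a"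
proof -
  have "0 \<le> L2sq u"
    by (simp add: L2sq_def)
  then show ?thesis
    using assms by (simp add: Hnorm_def Sa_def frac_sq_def)
qed

lemma coercive_if_quadratic_lower_bound:
  fixes N F :: "'b \<Rightarrow> real"
  assumes "0 < c" "\<And>u. u \<in> S \<Longrightarrow> c * ((N u)\<^sup>2 - a) \<le> F u"
  shows "\<forall>M. \<exists>R. \<forall>u \<in> S. N u \<ge> R \<longrightarrow> F u \<ge> M"
proof
  fix M
  let ?R = "sqrt (\<bar>M\<bar> / c + \<bar>a\<bar>)"
  have "M \<le> F u" if "u \<in> S" "?R \<le> N u" for u
  proof -
    have "?R\<^sup>2 \<le> (N u)\<^sup>2"
      using that(2) assms(1) by (intro power_mono) auto
    then have "\<bar>M\<bar> / c \<le> (N u)\<^sup>2 - a"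
      using assms(1) by simp
    then have "\<bar>M\<bar> \<le> c * ((N u)\<^sup>2 - a)"
      using assms(1) by (simp add: field_simps)
    then show ?thesis
      using assms(2)[OF that(1)] by linarith
  qed
  then show "\<exists>R. \<forall>u \<in> S. N u \<ge> R \<longrightarrow> F u \<ge> M"
    by blast
qed

theorem lemma3p4:
  fixes s1 s2 a \<alpha> \<beta> :: real and g :: "real \<Rightarrow> real"
  assumes "0 < s1" "s1 < s2" "s2 < 1"
    and "2 * s1 < real DIM('a::euclidean_space)"
    and "real DIM('a) < 2 * s1 * s2 / (s2 - s1)"
    and "0 < a"
    and G1: "continuous_on UNIV g" "\<And>s. g (- s) = - g s"
    and G2: "2 + 4 * s2 / real DIM('a) < \<alpha>" "\<alpha> < \<beta>"
            "\<beta> < 2 * real DIM('a) / (real DIM('a) - 2 * s1)"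
            "\<And>s. \<alpha> * Gprim g s \<le> g s * s" "\<And>s. g s * s \<le> \<beta> * Gprim g s"
    and G3: "\<And>s. Gtil g differentiable (at s)"
            "\<And>s. deriv (Gtil g) s * s \<ge> \<alpha> * Gtil g s"
  shows "\<forall>M. \<exists>R. \<forall>u \<in> (Pset s1 s2 g a :: ('a \<Rightarrow> real) set).
           Hnorm s1 s2 u \<ge> R \<longrightarrow> Ifun s1 s2 g u \<ge> M"
proof (rule coercive_if_quadratic_lower_bound)
  define d where "d = real DIM('a)"
  have "0 < d"
    by (simp add: d_def)
  moreover have "4 * s2 / d < \<alpha> - 2"
    using G2(1) by (simp add: d_def)
  ultimately have gap: "4 * s2 < d * (\<alpha> - 2)"
    by (simp add: pos_divide_less_eq mult.commute)
  then have "0 < d * (\<alpha> - 2)"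
    using assms(1,2) by linarith
  then have "2 < \<alpha>"
    using \<open>0 < d\<close> by (simp add: zero_less_mult_iff)
  then show "0 < 1 / 2 - 2 * s2 / (d * (\<alpha> - 2))"
    using gap \<open>0 < d\<close> by (simp add: field_simps)
  fix u :: "'a \<Rightarrow> real"
  assume u: "u \<in> Pset s1 s2 g a"
  then have "(Hnorm s1 s2 u)\<^sup>2 - a = frac_sq s1 u + frac_sq s2 u"
    using Hnorm_sq_on_Sa[of u s1 s2 a] by (simp add: Pset_def)
  then show "(1 / 2 - 2 * s2 / (d * (\<alpha> - 2))) * ((Hnorm s1 s2 u)\<^sup>2 - a) \<le> Ifun s1 s2 g u"
    using Ifun_lower_bound_on_Pset[OF _ u G1(1) \<open>2 < \<alpha>\<close> G2(2,4,5)] assms(2)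
    by (simp add: d_def)
qed

end
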